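(* Let $f:\Delta_{n-1}\to\Delta_{n-1}$ be a continuous map, with coordinate functions $f_1,\dots,f_n$. (i) If $f(\sigma)\subseteq\sigma$ for every face $\sigma$ of $\Delta_{n-1}$, then $f$ is surjective. (ii) Suppose, in addition to the hypothesis of (i), that for every $x\in\mathrm{int}(\Delta_{n-1})$, every nonempty subset $I\subsetneq[n]$, with $t:=\sum_{i\in I}x_i$, and every $\alpha\in(t,1]$, we have $f_i(x^I_\alpha)\ge f_i(x)$ for all $i\in I$, with strict inequality for at least one $i\in I$, where \[ x^I_\alpha:=\alpha\Big(\sum_{i\in I}\frac{x_i}{t}e_i\Big)+(1-\alpha)\Big(\sum_{j\in[n]\setminus I}\frac{x_j}{1-t}e_j\Big)\in\Delta_{n-1}. \] Then $f$ is injective on $f^{-1}(\mathrm{int}(\Delta_{n-1}))$.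
   Context: $e_1,\dots,e_n$ is the standard basis of $\mathbb{R}^n$, $\Delta_{n-1}=\mathrm{conv}\{e_1,\dots,e_n\}$ is the standard simplex, its faces are $\mathrm{conv}\{e_i:i\in I\}$ for $I\subseteq[n]$, and $\mathrm{int}(\Delta_{n-1})$ denotes its relative interior. *)

theory Defs
  imports "HOL-Analysis.Analysis"
begin

text \<open>Standard basis vector e_i of real^'n (index type 'n plays the role of [n]).\<close>
definition e_vec :: "'n::finite \<Rightarrow> real^'n" where
  "e_vec i = axis i 1"

definition simplex_face :: "'n::finite set \<Rightarrow> (real^'n) set" where
  "simplex_face I = convex hull (e_vec ` I)"

definition std_simplex :: "(real^'n::finite) set" where
  "std_simplex = convex hull (range e_vec)"

definition x_I_alpha :: "real^'n::finite \<Rightarrow> 'n set \<Rightarrow> real \<Rightarrow> real^'n" where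
  "x_I_alpha x I \<alpha> =
     (let t = (\<Sum>i\<in>I. x $ i) in
      \<alpha> *\<^sub>R (\<Sum>i\<in>I. (x $ i / t) *\<^sub>R e_vec i)
      + (1 - \<alpha>) *\<^sub>R (\<Sum>j\<in>UNIV - I. (x $ j / (1 - t)) *\<^sub>R e_vec j))"

end

theory Submission
  imports Defs
begin

(*
  (i) For p in the simplex, Brouwer's theorem applied to x \<mapsto> (x + c x) / (1 + \<Sum>i. c x i) with
  c x = (p - f x)\<^sup>+ gives a point x at which (p - f x)\<^sup>+ is proportional to x. As f x lies
  in the face spanned by the support of x, p cannot exceed f x on the whole support, so
  (p - f x)\<^sup>+ = 0, and then p = f x because both coordinate sums are 1.

  (ii) Extend f to the open positive orthant by g = f \<circ> normalisation. The hypothesis says that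
  scaling up a proper block I of coordinates raises g weakly on I and strictly somewhere on I.
  If f x = f y for interior x, y, write y = r x coordinatewise. Raising the top level set of r
  to the next level one step at a time (induction on the number of values of r) passes from x
  to y and strictly increases g at a coordinate where r is maximal, unless r is constant,
  i.e. y = x.
*)

lemma e_vec_nth: "e_vec i $ k = (if k = i then 1 else 0)"
  by (simp add: e_vec_def axis_def)

lemma inj_e_vec: "inj e_vec"
  by (auto simp: inj_def e_vec_def axis_eq_axis)

lemma range_e_vec: "range e_vec = (Basis :: (real^'n::finite) set)"
  by (auto simp: Basis_vec_def e_vec_def)

lemma sum_scaleR_e_vec_nth: "(\<Sum>i\<in>I. c i *\<^sub>R e_vec i) $ k = (if k \<in> I then c k else 0)"
  by (simp add: e_vec_nth if_distrib sum.If_cases cong: if_cong)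

lemma weights_e_vec_iff:
  fixes x :: "real^'n::finite"
  shows "(\<exists>u. (\<forall>v\<in>e_vec ` I. P (u v)) \<and> sum u (e_vec ` I) = 1 \<and> (\<Sum>v\<in>e_vec ` I. u v *\<^sub>R v) = x)
     \<longleftrightarrow> (\<forall>i\<in>I. P (x $ i)) \<and> (\<forall>i. i \<notin> I \<longrightarrow> x $ i = 0) \<and> (\<Sum>i\<in>I. x $ i) = 1"
    (is "?lhs \<longleftrightarrow> ?rhs")
proof
  have inj: "inj_on e_vec I" using inj_e_vec by (rule inj_on_subset) simp
  show "?lhs \<Longrightarrow> ?rhs"
    by (auto simp: sum.reindex[OF inj] sum_scaleR_e_vec_nth simp del: sum_component)
  assume ?rhs
  then have "x = (\<Sum>i\<in>I. (x $ i) *\<^sub>R e_vec i)"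
    by (auto simp: vec_eq_iff sum_scaleR_e_vec_nth simp del: sum_component)
  with \<open>?rhs\<close> show ?lhs
    by (intro exI[of _ "\<lambda>v. x $ inv e_vec v"]) (simp add: sum.reindex[OF inj] inv_f_f[OF inj_e_vec])
qed

lemma simplex_face_eq:
  "simplex_face I = {x. (\<forall>i\<in>I. 0 \<le> x $ i) \<and> (\<forall>i. i \<notin> I \<longrightarrow> x $ i = 0) \<and> (\<Sum>i\<in>I. x $ i) = 1}"
  unfolding simplex_face_def convex_hull_finite[OF finite_imageI[OF finite]] weights_e_vec_iff ..

lemma std_simplex_eq: "std_simplex = {x. (\<forall>i. 0 \<le> x $ i) \<and> (\<Sum>i\<in>UNIV. x $ i) = 1}"
  using simplex_face_eq[of UNIV] by (simp add: simplex_face_def std_simplex_def)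

lemma rel_interior_std_simplex_eq:
  "rel_interior std_simplex = {x. (\<forall>i. 0 < x $ i) \<and> (\<Sum>i\<in>UNIV. x $ i) = 1}"
proof -
  have indep: "\<not> affine_dependent (range e_vec :: (real^'n) set)"
    using affine_dependent_imp_dependent independent_Basis range_e_vec by metis
  then show ?thesis
    unfolding std_simplex_def rel_interior_convex_hull_explicit[OF indep] weights_e_vec_iff by simp
qed

lemma mem_simplex_face_iff:
  "x \<in> simplex_face I \<longleftrightarrow> x \<in> std_simplex \<and> (\<forall>i. i \<notin> I \<longrightarrow> x $ i = 0)"
proof -
  have "(\<Sum>i\<in>I. x $ i) = (\<Sum>i\<in>UNIV. x $ i)" if "\<forall>i. i \<notin> I \<longrightarrow> x $ i = 0"
    using that by (intro sum.mono_neutral_left) auto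
  then show ?thesis
    by (auto simp: simplex_face_eq std_simplex_eq)
qed

lemma compact_std_simplex: "compact std_simplex"
  unfolding std_simplex_def by (intro compact_convex_hull finite_imp_compact) simp

lemma convex_std_simplex: "convex std_simplex"
  unfolding std_simplex_def by simp

lemma std_simplex_eqI:
  assumes "p \<in> std_simplex" "y \<in> std_simplex" "\<And>i. p $ i \<le> y $ i"
  shows "p = y"
proof (rule ccontr)
  assume "p \<noteq> y"
  then obtain j where "p $ j < y $ j"
    using assms(3) by (metis order_less_le vec_eq_iff)
  then have "(\<Sum>i\<in>UNIV. p $ i) < (\<Sum>i\<in>UNIV. y $ i)"
    using assms(3) by (intro sum_strict_mono_ex1) auto
  with assms(1,2) show False
    by (simp add: std_simplex_eq)
qed

lemma simplex_face_ex_le: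
  assumes "y \<in> simplex_face T" "p \<in> std_simplex"
  shows "\<exists>i\<in>T. p $ i \<le> y $ i"
proof (rule ccontr)
  assume "\<not> ?thesis"
  then have less: "\<forall>i\<in>T. y $ i < p $ i" by auto
  have "T \<noteq> {}" and "(\<Sum>i\<in>T. y $ i) = 1"
    using assms(1) by (auto simp: simplex_face_eq)
  then have "1 < (\<Sum>i\<in>T. p $ i)"
    using less by (metis finite sum_strict_mono)
  also have "\<dots> \<le> (\<Sum>i\<in>UNIV. p $ i)"
    using assms(2) by (intro sum_mono2) (auto simp: std_simplex_eq)
  finally show False
    using assms(2) by (simp add: std_simplex_eq)
qed

lemma scaleR_add_nonneg_in_std_simplex:
  assumes "x \<in> std_simplex" "\<And>i. 0 \<le> c $ i"
  shows "inverse (1 + (\<Sum>i\<in>UNIV. c $ i)) *\<^sub>R (x + c) \<in> std_simplex"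
proof -
  have "0 \<le> (\<Sum>i\<in>UNIV. c $ i)"
    using assms(2) by (simp add: sum_nonneg)
  with assms show ?thesis
    by (auto simp: std_simplex_eq sum.distrib simp flip: sum_distrib_left)
qed

lemma positive_part_proportional_imp_eq:
  assumes x: "x \<in> std_simplex" and y: "y \<in> simplex_face {i. 0 < x $ i}" and p: "p \<in> std_simplex"
    and pos_part: "\<And>i. max 0 (p $ i - y $ i) = C * x $ i"
  shows "p = y"
proof (cases "C = 0")
  case True
  then have "p $ i \<le> y $ i" for i
    using pos_part[of i] by (metis diff_le_0_iff_le max.cobounded2 mult_zero_left)
  moreover have "y \<in> std_simplex"
    using y by (simp add: mem_simplex_face_iff)
  ultimately show ?thesis
    using p by (intro std_simplex_eqI)
next
  case False
  obtain i where "0 < x $ i" "p $ i \<le> y $ i"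
    using simplex_face_ex_le[OF y p] by blast
  with pos_part[of i] False show ?thesis
    by simp
qed

theorem surj_on_std_simplex_if_faces_invariant:
  fixes f :: "real^'n::finite \<Rightarrow> real^'n"
  assumes cont: "continuous_on std_simplex f"
    and maps: "f ` std_simplex \<subseteq> std_simplex"
    and faces: "\<forall>I. f ` simplex_face I \<subseteq> simplex_face I"
  shows "f ` std_simplex = std_simplex"
proof
  show "std_simplex \<subseteq> f ` std_simplex"
  proof
    fix p :: "real^'n"
    assume p: "p \<in> std_simplex"
    define c where "c x = (\<chi> i. max 0 (p $ i - f x $ i))" for x
    define G where "G x = inverse (1 + (\<Sum>i\<in>UNIV. c x $ i)) *\<^sub>R (x + c x)" for x
    have "continuous_on std_simplex G"
      unfolding G_def c_def
      by (intro continuous_intros cont) (auto simp: add_nonneg_eq_0_iff sum_nonneg)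
    moreover have "G y \<in> std_simplex" if "y \<in> std_simplex" for y
      unfolding G_def by (rule scaleR_add_nonneg_in_std_simplex[OF that]) (simp add: c_def)
    ultimately obtain x where x: "x \<in> std_simplex" and "G x = x"
      using brouwer[OF compact_std_simplex convex_std_simplex, of G] p by blast
    define C where "C = (\<Sum>i\<in>UNIV. c x $ i)"
    have "C \<ge> 0"
      unfolding C_def c_def by (simp add: sum_nonneg)
    then have "x + c x = (1 + C) *\<^sub>R G x"
      by (simp add: G_def C_def)
    then have "c x = C *\<^sub>R x"
      using \<open>G x = x\<close> by (simp add: algebra_simps)
    then have "max 0 (p $ i - f x $ i) = C * x $ i" for i
      by (simp add: c_def vec_eq_iff)
    moreover have "x \<in> simplex_face {i. 0 < x $ i}"
      using x by (auto simp: mem_simplex_face_iff std_simplex_eq less_le)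
    then have "f x \<in> simplex_face {i. 0 < x $ i}"
      using faces by blast
    ultimately have "p = f x"
      using positive_part_proportional_imp_eq x p by blast
    with x show "p \<in> f ` std_simplex"
      by blast
  qed
qed (rule maps)

definition simplex_normalize :: "real^'n::finite \<Rightarrow> real^'n" where
  "simplex_normalize v = inverse (\<Sum>i\<in>UNIV. v $ i) *\<^sub>R v"

definition scale_coords :: "'n::finite set \<Rightarrow> real \<Rightarrow> real^'n \<Rightarrow> real^'n" where
  "scale_coords I l v = (\<chi> i. if i \<in> I then l * v $ i else v $ i)"

definition mult_coords :: "('n::finite \<Rightarrow> real) \<Rightarrow> real^'n \<Rightarrow> real^'n" where
  "mult_coords r v = (\<chi> i. r i * v $ i)"

definition maximizers :: "('n::finite \<Rightarrow> real) \<Rightarrow> 'n set" where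
  "maximizers r = {i. r i = Max (range r)}"

(*
  The hypothesis of (ii) read on the positive orthant: by x_I_alpha_eq_simplex_normalize, x\<^sup>I\<^sub>\<alpha> is
  the normalisation of x with its I-block scaled by l, where \<alpha> = l t / (l t + 1 - t) runs
  through (t, 1) as l runs through (1, \<infinity>).
*)
definition increasing_on_blocks :: "(real^'n::finite \<Rightarrow> real^'n) \<Rightarrow> bool" where
  "increasing_on_blocks g \<longleftrightarrow>
     (\<forall>u I l. (\<forall>i. 0 < u $ i) \<and> I \<noteq> {} \<and> I \<noteq> UNIV \<and> 1 < l \<longrightarrow>
        (\<forall>i\<in>I. g u $ i \<le> g (scale_coords I l u) $ i) \<and> (\<exists>i\<in>I. g u $ i < g (scale_coords I l u) $ i))"

lemma simplex_normalize_scaleR: "0 < c \<Longrightarrow> simplex_normalize (c *\<^sub>R v) = simplex_normalize v"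
  by (simp add: simplex_normalize_def sum_distrib_left[symmetric])

lemma simplex_normalize_id: "x \<in> std_simplex \<Longrightarrow> simplex_normalize x = x"
  by (simp add: simplex_normalize_def std_simplex_eq)

lemma simplex_normalize_in_rel_interior:
  assumes "\<forall>i. 0 < v $ i"
  shows "simplex_normalize v \<in> rel_interior std_simplex"
proof -
  have "0 < (\<Sum>i\<in>UNIV. v $ i)"
    using assms by (simp add: sum_pos)
  with assms show ?thesis
    by (simp add: rel_interior_std_simplex_eq simplex_normalize_def sum_distrib_left[symmetric])
qed

lemma scale_coords_scaleR: "scale_coords I l (c *\<^sub>R v) = c *\<^sub>R scale_coords I l v"
  by (simp add: scale_coords_def vec_eq_iff)

lemma x_I_alpha_nth:
  "x_I_alpha x I \<alpha> $ k =
     (if k \<in> I then \<alpha> * x $ k / (\<Sum>i\<in>I. x $ i) else (1 - \<alpha>) * x $ k / (1 - (\<Sum>i\<in>I. x $ i)))"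
  by (simp add: x_I_alpha_def Let_def sum_scaleR_e_vec_nth del: sum_component)

lemma sum_scale_coords:
  "(\<Sum>i\<in>UNIV. scale_coords I l x $ i) = l * (\<Sum>i\<in>I. x $ i) + (\<Sum>i\<in>UNIV - I. x $ i)"
  by (simp add: scale_coords_def sum.If_cases sum_distrib_left Compl_eq_Diff_UNIV)

lemma x_I_alpha_eq_simplex_normalize:
  assumes x: "x \<in> std_simplex" and t: "t = (\<Sum>i\<in>I. x $ i)" "0 < t" "t < 1" and "0 < l"
  shows "x_I_alpha x I (l * t / (l * t + (1 - t))) = simplex_normalize (scale_coords I l x)"
proof -
  define D where "D = l * t + (1 - t)"
  have "D \<noteq> 0"
    using t(2,3) \<open>0 < l\<close> unfolding D_def by (metis add_pos_pos diff_gt_0_iff_gt less_irrefl mult_pos_pos)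
  have "(\<Sum>i\<in>UNIV - I. x $ i) = 1 - t"
    using x t(1) by (simp add: std_simplex_eq sum_diff)
  then have "(\<Sum>i\<in>UNIV. scale_coords I l x $ i) = D"
    using t(1) by (simp add: sum_scale_coords D_def)
  then have "simplex_normalize (scale_coords I l x) $ k = (if k \<in> I then l else 1) * x $ k / D" for k
    by (simp add: simplex_normalize_def scale_coords_def divide_inverse_commute)
  moreover have "1 - l * t / D = (1 - t) / D"
    using \<open>D \<noteq> 0\<close> by (simp add: D_def field_simps)
  ultimately show ?thesis
    unfolding D_def[symmetric] vec_eq_iff x_I_alpha_nth[of x I, folded t(1)]
    using t(2,3) by simp
qed

lemma sum_coords_strict_bounds:
  assumes "x \<in> rel_interior std_simplex" "I \<noteq> {}" "I \<noteq> UNIV"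
  shows "0 < (\<Sum>i\<in>I. x $ i)" "(\<Sum>i\<in>I. x $ i) < 1"
proof -
  have pos: "\<forall>i. 0 < x $ i" and sum: "(\<Sum>i\<in>UNIV. x $ i) = 1"
    using assms(1) by (auto simp: rel_interior_std_simplex_eq)
  show "0 < (\<Sum>i\<in>I. x $ i)"
    using pos assms(2) by (simp add: sum_pos)
  have "0 < (\<Sum>i\<in>UNIV - I. x $ i)"
    using pos assms(3) by (intro sum_pos) auto
  then show "(\<Sum>i\<in>I. x $ i) < 1"
    using sum by (simp add: sum_diff)
qed

lemma x_I_alpha_parameter_bounds:
  fixes t l :: real
  assumes "0 < t" "t < 1" "1 < l"
  shows "t < l * t / (l * t + (1 - t))" "l * t / (l * t + (1 - t)) \<le> 1"
proof -
  have D: "0 < l * t + (1 - t)" and "0 < (l - 1) * t * (1 - t)"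
    using assms by (simp_all add: add_pos_pos)
  then have "t * (l * t + (1 - t)) < l * t"
    by (simp add: algebra_simps)
  with D show "t < l * t / (l * t + (1 - t))"
    by (simp add: pos_less_divide_eq)
  show "l * t / (l * t + (1 - t)) \<le> 1"
    using D \<open>t < 1\<close> by (simp add: pos_divide_le_eq)
qed

lemma increasing_on_blocks_comp_simplex_normalize:
  fixes f :: "real^'n::finite \<Rightarrow> real^'n"
  assumes moves: "\<forall>x\<in>rel_interior std_simplex. \<forall>I. I \<noteq> {} \<and> I \<noteq> UNIV \<longrightarrow>
               (\<forall>\<alpha>. (\<Sum>i\<in>I. x $ i) < \<alpha> \<and> \<alpha> \<le> 1 \<longrightarrow>
                  (\<forall>i\<in>I. f (x_I_alpha x I \<alpha>) $ i \<ge> f x $ i) \<and>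
                  (\<exists>i\<in>I. f (x_I_alpha x I \<alpha>) $ i > f x $ i))"
  shows "increasing_on_blocks (f \<circ> simplex_normalize)"
  unfolding increasing_on_blocks_def
proof (intro allI impI, elim conjE)
  fix u :: "real^'n" and I :: "'n set" and l :: real
  assume u: "\<forall>i. 0 < u $ i" and I: "I \<noteq> {}" "I \<noteq> UNIV" and "1 < l"
  define x where "x = simplex_normalize u"
  define t where "t = (\<Sum>i\<in>I. x $ i)"
  define \<alpha> where "\<alpha> = l * t / (l * t + (1 - t))"
  have x: "x \<in> rel_interior std_simplex"
    unfolding x_def using u by (rule simplex_normalize_in_rel_interior)
  then have "0 < t" "t < 1"
    unfolding t_def using sum_coords_strict_bounds I by blast+
  then have "t < \<alpha>" "\<alpha> \<le> 1"
    unfolding \<alpha>_def using x_I_alpha_parameter_bounds \<open>1 < l\<close> by blast+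
  have "0 < inverse (\<Sum>i\<in>UNIV. u $ i)"
    using u by (simp add: sum_pos)
  then have "simplex_normalize (scale_coords I l x) = simplex_normalize (scale_coords I l u)"
    by (simp add: x_def simplex_normalize_def[of u] scale_coords_scaleR simplex_normalize_scaleR)
  moreover have "x_I_alpha x I \<alpha> = simplex_normalize (scale_coords I l x)"
    unfolding \<alpha>_def using x rel_interior_subset \<open>0 < t\<close> \<open>t < 1\<close> \<open>1 < l\<close>
    by (intro x_I_alpha_eq_simplex_normalize[OF _ t_def]) auto
  ultimately have "x_I_alpha x I \<alpha> = simplex_normalize (scale_coords I l u)"
    by simp
  moreover have "(\<forall>i\<in>I. f x $ i \<le> f (x_I_alpha x I \<alpha>) $ i) \<and> (\<exists>i\<in>I. f x $ i < f (x_I_alpha x I \<alpha>) $ i)"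
    using moves x I \<open>t < \<alpha>\<close> \<open>\<alpha> \<le> 1\<close> unfolding t_def by blast
  ultimately show "(\<forall>i\<in>I. (f \<circ> simplex_normalize) u $ i \<le> (f \<circ> simplex_normalize) (scale_coords I l u) $ i) \<and>
       (\<exists>i\<in>I. (f \<circ> simplex_normalize) u $ i < (f \<circ> simplex_normalize) (scale_coords I l u) $ i)"
    by (simp add: x_def)
qed

lemma maximizers_nonempty: "maximizers (r :: 'n::finite \<Rightarrow> real) \<noteq> {}"
proof -
  have "Max (range r) \<in> range r"
    by (intro Max_in) auto
  then show ?thesis
    by (auto simp: maximizers_def image_iff)
qed

(* r' is r with its maximal value lowered to the next largest one. *)
lemma mult_coords_split_maximizers:
  fixes r :: "'n::finite \<Rightarrow> real"
  assumes pos: "\<forall>i. 0 < r i" and nonconst: "maximizers r \<noteq> UNIV"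
  obtains r' l where "\<forall>i. 0 < r' i" "card (range r') < card (range r)"
    "maximizers r \<subseteq> maximizers r'" "1 < l"
    "\<And>v. mult_coords r v = scale_coords (maximizers r) l (mult_coords r' v)"
proof -
  define M where "M = Max (range r)"
  define A where "A = maximizers r"
  have A: "A = {i. r i = M}"
    by (simp add: A_def M_def maximizers_def)
  have le_M: "r i \<le> M" for i
    by (simp add: M_def)
  define M2 where "M2 = Max (r ` (UNIV - A))"
  have "M2 \<in> r ` (UNIV - A)"
    unfolding M2_def using nonconst by (intro Max_in) (auto simp: A_def)
  then obtain j where "j \<notin> A" "r j = M2"
    by blast
  then have "M2 < M" "0 < M2"
    using le_M[of j] pos A by (auto simp: order_less_le)
  define r' where "r' i = (if i \<in> A then M2 else r i)" for i
  have range_r': "range r' = r ` (UNIV - A)"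
    using \<open>j \<notin> A\<close> \<open>r j = M2\<close> by (auto simp: r'_def image_iff)
  have "M \<in> range r"
    unfolding M_def by (intro Max_in) auto
  moreover have "M \<notin> r ` (UNIV - A)"
    using A by auto
  ultimately have "card (range r') < card (range r)"
    unfolding range_r' by (intro psubset_card_mono) auto
  moreover have "Max (range r') = M2"
    unfolding range_r' M2_def ..
  then have "A \<subseteq> maximizers r'"
    by (auto simp: maximizers_def r'_def)
  moreover have "mult_coords r v = scale_coords A (M / M2) (mult_coords r' v)" for v
    using \<open>0 < M2\<close> by (simp add: vec_eq_iff mult_coords_def scale_coords_def r'_def A)
  moreover have "\<forall>i. 0 < r' i"
    using pos \<open>0 < M2\<close> by (simp add: r'_def)
  moreover have "1 < M / M2"
    using \<open>M2 < M\<close> \<open>0 < M2\<close> by simp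
  ultimately show thesis
    using that unfolding A_def by blast
qed

lemma increasing_on_blocksD:
  assumes "increasing_on_blocks g" "\<forall>i. 0 < u $ i" "I \<noteq> {}" "I \<noteq> UNIV" "1 < l"
  shows "\<forall>i\<in>I. g u $ i \<le> g (scale_coords I l u) $ i" "\<exists>i\<in>I. g u $ i < g (scale_coords I l u) $ i"
  using assms unfolding increasing_on_blocks_def by blast+

lemma increasing_on_blocks_mult_coords_le:
  fixes g :: "real^'n::finite \<Rightarrow> real^'n"
  assumes g: "increasing_on_blocks g" and hom: "\<And>c u. 0 < c \<Longrightarrow> g (c *\<^sub>R u) = g u"
    and v: "\<forall>i. 0 < v $ i"
  shows "\<forall>i. 0 < r i \<Longrightarrow> i \<in> maximizers r \<Longrightarrow> g v $ i \<le> g (mult_coords r v) $ i"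
proof (induction "card (range r)" arbitrary: r i rule: less_induct)
  case less
  show ?case
  proof (cases "maximizers r = UNIV")
    case True
    define M where "M = Max (range r)"
    have "r j = M" for j
      using True by (auto simp: maximizers_def M_def)
    then have "mult_coords r v = M *\<^sub>R v" and "0 < M"
      using less.prems(1) by (auto simp: mult_coords_def vec_eq_iff)
    then show ?thesis
      using hom by simp
  next
    case False
    obtain r' l where r': "\<forall>i. 0 < r' i" "card (range r') < card (range r)"
      "maximizers r \<subseteq> maximizers r'" "1 < l"
      and split: "\<And>v. mult_coords r v = scale_coords (maximizers r) l (mult_coords r' v)"
      using mult_coords_split_maximizers[OF less.prems(1) False] by blast
    define w where "w = mult_coords r' v"
    have "\<forall>i. 0 < w $ i"
      using r'(1) v by (simp add: w_def mult_coords_def)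
    have "i \<in> maximizers r'"
      using r'(3) less.prems(2) by blast
    then have "g v $ i \<le> g w $ i"
      unfolding w_def by (rule less.hyps[OF r'(2) r'(1)])
    also have "\<dots> \<le> g (scale_coords (maximizers r) l w) $ i"
      using increasing_on_blocksD(1)[OF g \<open>\<forall>i. 0 < w $ i\<close> maximizers_nonempty False r'(4)]
        less.prems(2) by blast
    finally show ?thesis
      by (simp add: split w_def)
  qed
qed

lemma increasing_on_blocks_mult_coords_less:
  fixes g :: "real^'n::finite \<Rightarrow> real^'n"
  assumes g: "increasing_on_blocks g" and hom: "\<And>c u. 0 < c \<Longrightarrow> g (c *\<^sub>R u) = g u"
    and v: "\<forall>i. 0 < v $ i" and r: "\<forall>i. 0 < r i" "maximizers r \<noteq> UNIV"
  shows "\<exists>i. g v $ i < g (mult_coords r v) $ i"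
proof -
  obtain r' l where r': "\<forall>i. 0 < r' i" "card (range r') < card (range r)"
      "maximizers r \<subseteq> maximizers r'" "1 < l"
    and split: "\<And>v. mult_coords r v = scale_coords (maximizers r) l (mult_coords r' v)"
    using mult_coords_split_maximizers[OF r] by blast
  define w where "w = mult_coords r' v"
  have "\<forall>i. 0 < w $ i"
    using r'(1) v by (simp add: w_def mult_coords_def)
  then obtain i where "i \<in> maximizers r" and less: "g w $ i < g (scale_coords (maximizers r) l w) $ i"
    using increasing_on_blocksD(2)[OF g \<open>\<forall>i. 0 < w $ i\<close> maximizers_nonempty r(2) r'(4)] by blast
  have "i \<in> maximizers r'"
    using r'(3) \<open>i \<in> maximizers r\<close> by blast
  then have "g v $ i \<le> g w $ i"
    unfolding w_def using increasing_on_blocks_mult_coords_le[OF g _ v r'(1)] hom by blast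
  with less have "g v $ i < g (mult_coords r v) $ i"
    by (simp add: split w_def)
  then show ?thesis ..
qed

lemma increasing_on_blocks_eq_imp_proportional:
  fixes g :: "real^'n::finite \<Rightarrow> real^'n"
  assumes g: "increasing_on_blocks g" and hom: "\<And>c u. 0 < c \<Longrightarrow> g (c *\<^sub>R u) = g u"
    and u: "\<forall>i. 0 < u $ i" and w: "\<forall>i. 0 < w $ i" and eq: "g u = g w"
  shows "\<exists>c>0. w = c *\<^sub>R u"
proof -
  define r where "r i = w $ i / u $ i" for i
  have r: "\<forall>i. 0 < r i"
    using u w by (simp add: r_def)
  have w_eq: "w = mult_coords r u"
    using u by (simp add: vec_eq_iff mult_coords_def r_def order_less_imp_not_eq2)
  have "maximizers r = UNIV"
  proof (rule ccontr)
    assume "maximizers r \<noteq> UNIV"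
    then obtain i where "g u $ i < g (mult_coords r u) $ i"
      using increasing_on_blocks_mult_coords_less[OF g _ u r] hom by blast
    with eq w_eq show False
      by simp
  qed
  define M where "M = Max (range r)"
  have "r i = M" for i
    using \<open>maximizers r = UNIV\<close> by (auto simp: maximizers_def M_def)
  then have "w = M *\<^sub>R u" and "0 < M"
    using w_eq r by (auto simp: vec_eq_iff mult_coords_def)
  then show ?thesis
    by blast
qed

lemma rel_interior_if_faces_invariant:
  assumes faces: "\<forall>I. f ` simplex_face I \<subseteq> simplex_face I"
    and x: "x \<in> std_simplex" and fx: "f x \<in> rel_interior std_simplex"
  shows "x \<in> rel_interior std_simplex"
proof -
  have "0 < x $ j" for j
  proof (rule ccontr)
    assume "\<not> 0 < x $ j"
    with x have "x \<in> simplex_face (UNIV - {j})"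
      by (auto simp: mem_simplex_face_iff std_simplex_eq intro: order_antisym)
    then have "f x \<in> simplex_face (UNIV - {j})"
      using faces by blast
    then have "f x $ j = 0"
      by (simp add: mem_simplex_face_iff)
    moreover have "0 < f x $ j"
      using fx by (simp add: rel_interior_std_simplex_eq)
    ultimately show False
      by simp
  qed
  moreover have "(\<Sum>i\<in>UNIV. x $ i) = 1"
    using x by (simp add: std_simplex_eq)
  ultimately show ?thesis
    by (simp add: rel_interior_std_simplex_eq)
qed

theorem inj_on_preimage_rel_interior_std_simplex:
  fixes f :: "real^'n::finite \<Rightarrow> real^'n"
  assumes faces: "\<forall>I. f ` simplex_face I \<subseteq> simplex_face I"
    and moves: "\<forall>x\<in>rel_interior std_simplex. \<forall>I. I \<noteq> {} \<and> I \<noteq> UNIV \<longrightarrow>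
               (\<forall>\<alpha>. (\<Sum>i\<in>I. x $ i) < \<alpha> \<and> \<alpha> \<le> 1 \<longrightarrow>
                  (\<forall>i\<in>I. f (x_I_alpha x I \<alpha>) $ i \<ge> f x $ i) \<and>
                  (\<exists>i\<in>I. f (x_I_alpha x I \<alpha>) $ i > f x $ i))"
  shows "inj_on f {x \<in> std_simplex. f x \<in> rel_interior std_simplex}"
proof (rule inj_onI, clarify)
  fix x y
  assume "x \<in> std_simplex" "f x \<in> rel_interior std_simplex"
    and "y \<in> std_simplex" "f y \<in> rel_interior std_simplex" and "f x = f y"
  then have x: "x \<in> rel_interior std_simplex" and y: "y \<in> rel_interior std_simplex"
    using rel_interior_if_faces_invariant[OF faces] by blast+
  have "(f \<circ> simplex_normalize) x = (f \<circ> simplex_normalize) y"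
    using \<open>x \<in> std_simplex\<close> \<open>y \<in> std_simplex\<close> \<open>f x = f y\<close> by (simp add: simplex_normalize_id)
  moreover have "\<forall>i. 0 < x $ i" "\<forall>i. 0 < y $ i"
    using x y by (simp_all add: rel_interior_std_simplex_eq)
  moreover have "(f \<circ> simplex_normalize) (c *\<^sub>R u) = (f \<circ> simplex_normalize) u" if "0 < c" for c u
    using that by (simp add: simplex_normalize_scaleR)
  ultimately obtain c where "y = c *\<^sub>R x"
    using increasing_on_blocks_eq_imp_proportional[OF increasing_on_blocks_comp_simplex_normalize[OF moves]]
    by blast
  then have "(\<Sum>i\<in>UNIV. y $ i) = c * (\<Sum>i\<in>UNIV. x $ i)"
    by (simp add: sum_distrib_left)
  with x y have "c = 1"
    by (simp add: rel_interior_std_simplex_eq)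
  with \<open>y = c *\<^sub>R x\<close> show "x = y"
    by simp
qed

theorem lemma6p4:
  fixes f :: "real^'n::finite \<Rightarrow> real^'n"
  assumes cont: "continuous_on std_simplex f"
    and maps: "f ` std_simplex \<subseteq> std_simplex"
  shows "((\<forall>I. f ` simplex_face I \<subseteq> simplex_face I) \<longrightarrow> f ` std_simplex = std_simplex)
       \<and> (((\<forall>I. f ` simplex_face I \<subseteq> simplex_face I) \<and>
            (\<forall>x\<in>rel_interior std_simplex. \<forall>I. I \<noteq> {} \<and> I \<noteq> UNIV \<longrightarrow>
               (\<forall>\<alpha>. (\<Sum>i\<in>I. x $ i) < \<alpha> \<and> \<alpha> \<le> 1 \<longrightarrow>
                  (\<forall>i\<in>I. f (x_I_alpha x I \<alpha>) $ i \<ge> f x $ i) \<and>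
                  (\<exists>i\<in>I. f (x_I_alpha x I \<alpha>) $ i > f x $ i))))
          \<longrightarrow> inj_on f {x \<in> std_simplex. f x \<in> rel_interior std_simplex})"
  using surj_on_std_simplex_if_faces_invariant[OF cont maps] inj_on_preimage_rel_interior_std_simplex
  by blast

end
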